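(* Let $V$ be a countable set, $\Omega_0$ a finite set, $\Omega=\Omega_0^V$, $q\in\mathbb N$, and let $\gamma=(\gamma_\Lambda)_{\Lambda\Subset V}$ be a quasilocal $q$-specification. Then $\mathcal G_q(\gamma)\neq\varnothing$.
   Context: $\Omega$ carries the product $\sigma$-algebra $\mathcal F$ and the topology of coordinatewise convergence; $\Omega^q$ the product topology. For $\Delta\subset V$, $\mathcal F_\Delta$ is the $\sigma$-algebra generated by coordinates in $\Delta$, $\mathcal F^q_{\Lambda^c}=(\mathcal F_{\Lambda^c})^{\otimes q}$. A probability $q$-kernel is a map $\gamma_\Lambda:\mathcal F\times\Omega^q\to[0,1]$ with $\gamma_\Lambda(\cdot\mid\eta_1,\dots,\eta_q)$ a probability measure and $\gamma_\Lambda(A\mid\cdot)$ $\mathcal F^q_{\Lambda^c}$-measurable; proper means $\gamma_\Lambda(A\mid\eta_1,\dots,\eta_q)=\frac1q\sum_i\mathbf 1_A(\eta_i)$ for $A\in\mathcal F_{\Lambda^c}$. Composition: $(\gamma_\Delta\gamma_\Lambda)(A\mid\eta)=\int_{\Omega^q}\gamma_\Lambda(A\mid\zeta_1,\dots,\zeta_q)\prod_i\gamma_\Delta(d\zeta_i\mid\eta)$. A $q$-specification is a family of proper probability $q$-kernels $(\gamma_\Lambda)_{\Lambda\Subset V}$ with $\gamma_\Delta\gamma_\Lambda=\gamma_\Delta$ for $\Lambda\subset\Delta\Subset V$. It is quasilocal if for each $\Lambda\Subset V$ and every event $A\in\mathcal F_\Lambda$ the map $(\omega_1,\dots,\omega_q)\mapsto\gamma_\Lambda(A\mid\omega_1,\dots,\omega_q)$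 is continuous. For a probability measure $\mu$ on $\Omega$, $\mu^{\otimes q}\gamma_\Lambda(A)=\int_{\Omega^q}\gamma_\Lambda(A\mid\eta_1,\dots,\eta_q)\prod_{i=1}^q\mu(d\eta_i)$. $\mathcal G_q(\gamma)$ is the set of probability measures $\mu$ on $(\Omega,\mathcal F)$ (called $q$-equilibrium measures) with $\mu^{\otimes q}\gamma_\Lambda=\mu$ for all $\Lambda\Subset V$. *)

theory Defs
  imports "HOL-Probability.Probability"
begin

text \<open>Configuration space Omega = Omega0^V with the product sigma-algebra
  (Omega0 = the finite type 'a, V = the countable type 'v).\<close>
definition Omega :: "('v \<Rightarrow> 'a) measure" where
  "Omega = PiM UNIV (\<lambda>_. count_space UNIV)"

definition coord_sigma :: "'v set \<Rightarrow> ('v \<Rightarrow> 'a) measure" where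
  "coord_sigma D = sigma UNIV {{\<omega>. \<omega> x = a} | x a. x \<in> D}"

definition Omega_top :: "('v \<Rightarrow> 'a) topology" where
  "Omega_top = product_topology (\<lambda>_. discrete_topology UNIV) UNIV"

text \<open>Omega^q is modelled as the extensional functions {..<q} -> Omega.\<close>
definition Omega_q :: "nat \<Rightarrow> (nat \<Rightarrow> 'v \<Rightarrow> 'a) measure" where
  "Omega_q q = PiM {..<q} (\<lambda>_. Omega)"

definition proper_prob_qkernel ::
  "nat \<Rightarrow> 'v set \<Rightarrow> ((nat \<Rightarrow> 'v \<Rightarrow> 'a) \<Rightarrow> ('v \<Rightarrow> 'a) measure) \<Rightarrow> bool" where
  "proper_prob_qkernel q L k \<longleftrightarrow>
     (\<forall>\<eta> \<in> space (Omega_q q). prob_space (k \<eta>) \<and> sets (k \<eta>) = sets Omega) \<and>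
     (\<forall>A \<in> sets Omega. (\<lambda>\<eta>. measure (k \<eta>) A)
         \<in> borel_measurable (PiM {..<q} (\<lambda>_. coord_sigma (- L)))) \<and>
     (\<forall>A \<in> sets (coord_sigma (- L)). \<forall>\<eta> \<in> space (Omega_q q).
         measure (k \<eta>) A = (1 / real q) * (\<Sum>i<q. indicator A (\<eta> i)))"

definition kernel_comp ::
  "nat \<Rightarrow> ((nat \<Rightarrow> 'v \<Rightarrow> 'a) \<Rightarrow> ('v \<Rightarrow> 'a) measure) \<Rightarrow> ((nat \<Rightarrow> 'v \<Rightarrow> 'a) \<Rightarrow> ('v \<Rightarrow> 'a) measure)
    \<Rightarrow> (nat \<Rightarrow> 'v \<Rightarrow> 'a) \<Rightarrow> ('v \<Rightarrow> 'a) set \<Rightarrow> ennreal" where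
  "kernel_comp q kD kL \<eta> A = (\<integral>\<^sup>+ \<zeta>. emeasure (kL \<zeta>) A \<partial>(PiM {..<q} (\<lambda>_. kD \<eta>)))"

definition q_specification ::
  "nat \<Rightarrow> ('v set \<Rightarrow> (nat \<Rightarrow> 'v \<Rightarrow> 'a) \<Rightarrow> ('v \<Rightarrow> 'a) measure) \<Rightarrow> bool" where
  "q_specification q \<gamma> \<longleftrightarrow>
     (\<forall>L. finite L \<longrightarrow> proper_prob_qkernel q L (\<gamma> L)) \<and>
     (\<forall>L D. L \<subseteq> D \<and> finite D \<longrightarrow>
        (\<forall>\<eta> \<in> space (Omega_q q). \<forall>A \<in> sets Omega.
           kernel_comp q (\<gamma> D) (\<gamma> L) \<eta> A = emeasure (\<gamma> D \<eta>) A))"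

definition quasilocal ::
  "nat \<Rightarrow> ('v set \<Rightarrow> (nat \<Rightarrow> 'v \<Rightarrow> 'a) \<Rightarrow> ('v \<Rightarrow> 'a) measure) \<Rightarrow> bool" where
  "quasilocal q \<gamma> \<longleftrightarrow>
     (\<forall>L. finite L \<longrightarrow> (\<forall>A \<in> sets (coord_sigma L).
        continuous_map (product_topology (\<lambda>_. Omega_top) {..<q}) euclideanreal
          (\<lambda>\<eta>. measure (\<gamma> L \<eta>) A)))"

definition Gq ::
  "nat \<Rightarrow> ('v set \<Rightarrow> (nat \<Rightarrow> 'v \<Rightarrow> 'a) \<Rightarrow> ('v \<Rightarrow> 'a) measure) \<Rightarrow> ('v \<Rightarrow> 'a) measure set" where
  "Gq q \<gamma> = {\<mu>. prob_space \<mu> \<and> sets \<mu> = sets Omega \<and>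
     (\<forall>L. finite L \<longrightarrow> (\<forall>A \<in> sets Omega.
        (\<integral>\<^sup>+ \<eta>. emeasure (\<gamma> L \<eta>) A \<partial>(PiM {..<q} (\<lambda>_. \<mu>))) = emeasure \<mu> A))}"

end

theory Submission
  imports Defs "HOL-Library.Diagonal_Subsequence"
begin

text \<open>Fix the boundary condition \<open>\<eta> = (\<omega>, \<dots>, \<omega>)\<close> and put \<open>\<mu>\<^sub>n = \<gamma>\<^sub>\<Lambda>\<^sub>n(\<cdot> | \<eta>)\<close> for finite
  volumes \<open>\<Lambda>\<^sub>n\<close> exhausting \<open>V\<close>. There are only countably many cylinder events, so along a
  diagonal subsequence \<open>\<mu>\<^sub>n(C)\<close> converges for every cylinder \<open>C\<close>. Cylinders are clopen in the
  compact space \<open>\<Omega>\<close>, so the limit is countably additive on the cylinder algebra and extends to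
  a probability measure \<open>\<nu>\<close>.

  It suffices to check \<open>\<nu>\<^sup>\<otimes>\<^sup>q\<gamma>\<^sub>\<Lambda>(C \<inter> D) = \<nu>(C \<inter> D)\<close> for cylinders \<open>C \<in> \<F>\<^sub>\<Lambda>\<close>,
  \<open>D \<in> \<F>\<^bsub>\<Lambda>\<^sup>c\<^esub>\<close>, since these generate. Consistency \<open>\<gamma>\<^sub>\<Lambda>\<gamma>\<^sub>\<Lambda> = \<gamma>\<^sub>\<Lambda>\<close> together with
  properness makes \<open>J \<mapsto> \<gamma>\<^sub>\<Lambda>(A | \<eta> \<circ> J)\<close> harmonic on the maps \<open>J : [q] \<rightarrow> [q]\<close>, and a
  maximum principle yields \<open>\<gamma>\<^sub>\<Lambda>(A | \<eta>) = q\<^sup>-\<^sup>1 \<Sum>\<^sub>j \<gamma>\<^sub>\<Lambda>(A | \<eta>\<^sub>j, \<dots>, \<eta>\<^sub>j)\<close>. Hence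
  \<open>\<gamma>\<^sub>\<Lambda>(C \<inter> D | \<eta>) = q\<^sup>-\<^sup>1 \<Sum>\<^sub>j h(\<eta>\<^sub>j)\<close> with \<open>h(\<omega>) = \<gamma>\<^sub>\<Lambda>(C | \<omega>, \<dots>, \<omega>) 1\<^sub>D(\<omega>)\<close>, which
  is continuous by quasilocality. Therefore \<open>\<nu>\<^sup>\<otimes>\<^sup>q\<gamma>\<^sub>\<Lambda>(C \<inter> D) = \<integral> h d\<nu> = lim \<integral> h d\<mu>\<^sub>n\<close>,
  and for \<open>\<Lambda> \<subseteq> \<Lambda>\<^sub>n\<close> consistency gives \<open>\<integral> h d\<mu>\<^sub>n = \<mu>\<^sub>n(C \<inter> D) \<rightarrow> \<nu>(C \<inter> D)\<close>.\<close>

section \<open>Cylinder events\<close>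

definition cylinder :: "'v set \<Rightarrow> ('v \<Rightarrow> 'a) set \<Rightarrow> ('v \<Rightarrow> 'a) set" where
  "cylinder F B = {\<omega>. restrict \<omega> F \<in> B}"

definition cylinders :: "('v \<Rightarrow> 'a) set set" where
  "cylinders = {cylinder F B | F B. finite F}"

lemma cylinder_enlarge: "F \<subseteq> G \<Longrightarrow> cylinder F B = cylinder G {h. restrict h F \<in> B}"
  unfolding cylinder_def by (simp add: Int_absorb1)

lemma cylinder_in_cylinders: "finite F \<Longrightarrow> cylinder F B \<in> cylinders"
  unfolding cylinders_def by auto

lemma Compl_cylinder: "- cylinder F B = cylinder F (- B)"
  unfolding cylinder_def by auto

lemma cylinder_Int:
  "cylinder F B \<inter> cylinder G B' = cylinder (F \<union> G) {h. restrict h F \<in> B \<and> restrict h G \<in> B'}"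
  using cylinder_enlarge[of F "F \<union> G" B] cylinder_enlarge[of G "F \<union> G" B']
  by (auto simp: cylinder_def)

lemma algebra_cylinders: "algebra UNIV (cylinders :: ('v \<Rightarrow> 'a) set set)"
  unfolding algebra_iff_Int
proof (intro conjI ballI)
  have "{} = cylinder {} {}" by (simp add: cylinder_def)
  then show "{} \<in> cylinders" by (metis cylinder_in_cylinders finite.emptyI)
  fix C D :: "('v \<Rightarrow> 'a) set" assume "C \<in> cylinders" "D \<in> cylinders"
  then obtain F B G B' where "finite F" "finite G" "C = cylinder F B" "D = cylinder G B'"
    unfolding cylinders_def by blast
  then show "UNIV - C \<in> cylinders" "C \<inter> D \<in> cylinders"
    by (auto simp: Compl_eq_Diff_UNIV[symmetric] Compl_cylinder cylinder_Int
        intro!: cylinder_in_cylinders)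
qed auto

lemma cylinders_closed:
  fixes C D :: "('v \<Rightarrow> 'a) set"
  shows "{} \<in> (cylinders :: ('v \<Rightarrow> 'a) set set)" "UNIV \<in> (cylinders :: ('v \<Rightarrow> 'a) set set)"
    "C \<in> cylinders \<Longrightarrow> D \<in> cylinders \<Longrightarrow> C \<union> D \<in> cylinders"
proof -
  interpret algebra UNIV "cylinders :: ('v \<Rightarrow> 'a) set set" by (rule algebra_cylinders)
  show "{} \<in> (cylinders :: ('v \<Rightarrow> 'a) set set)" "UNIV \<in> (cylinders :: ('v \<Rightarrow> 'a) set set)"
    "C \<in> cylinders \<Longrightarrow> D \<in> cylinders \<Longrightarrow> C \<union> D \<in> cylinders"
    by (auto simp: top)
qed

lemma countable_cylinders: "countable (cylinders :: ('v::countable \<Rightarrow> 'a::finite) set set)"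
proof -
  let ?all = "\<Union>F\<in>{F::'v set. finite F}. cylinder F ` Pow (PiE F (\<lambda>_. UNIV :: 'a set))"
  have "cylinders \<subseteq> ?all"
  proof
    fix C :: "('v \<Rightarrow> 'a) set" assume "C \<in> cylinders"
    then obtain F B where "finite F" "C = cylinder F B" unfolding cylinders_def by auto
    moreover have "cylinder F B = cylinder F (B \<inter> PiE F (\<lambda>_. UNIV))" unfolding cylinder_def by auto
    ultimately show "C \<in> ?all" by blast
  qed
  moreover have "countable ?all"
    by (intro countable_UN countable_Collect_finite countable_finite finite_imageI)
      (auto intro: finite_PiE)
  ultimately show ?thesis using countable_subset by blast
qed

lemma cylinder_eq_UN_points:
  "cylinder F B = (\<Union>h\<in>B \<inter> PiE F (\<lambda>_. UNIV). {\<omega>. \<forall>x\<in>F. \<omega> x = h x})"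
proof (intro set_eqI iffI)
  fix \<omega> assume "\<omega> \<in> cylinder F B"
  then show "\<omega> \<in> (\<Union>h\<in>B \<inter> PiE F (\<lambda>_. UNIV). {\<omega>. \<forall>x\<in>F. \<omega> x = h x})"
    by (intro UN_I[of "restrict \<omega> F"]) (auto simp: cylinder_def)
next
  fix \<omega> assume "\<omega> \<in> (\<Union>h\<in>B \<inter> PiE F (\<lambda>_. UNIV). {\<omega>. \<forall>x\<in>F. \<omega> x = h x})"
  then obtain h where "h \<in> B" "h \<in> PiE F (\<lambda>_. UNIV)" "\<forall>x\<in>F. \<omega> x = h x" by blast
  then have "restrict \<omega> F = h" by (auto simp: fun_eq_iff PiE_def extensional_def)
  then show "\<omega> \<in> cylinder F B" using \<open>h \<in> B\<close> by (simp add: cylinder_def)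
qed

lemma cylinder_in_sets:
  fixes M :: "('v \<Rightarrow> 'a::finite) measure"
  assumes "space M = UNIV" "finite F" "\<And>x a. x \<in> F \<Longrightarrow> {\<omega>. \<omega> x = a} \<in> sets M"
  shows "cylinder F B \<in> sets M"
proof -
  have "{\<omega>. \<forall>x\<in>F. \<omega> x = h x} \<in> sets M" for h
  proof (cases "F = {}")
    case True
    then show ?thesis using sets.top[of M] assms(1) by simp
  next
    case False
    have "{\<omega>. \<forall>x\<in>F. \<omega> x = h x} = (\<Inter>x\<in>F. {\<omega>. \<omega> x = h x})" by auto
    then show ?thesis using False assms by (auto intro!: sets.finite_INT)
  qed
  moreover have "finite (B \<inter> PiE F (\<lambda>_. UNIV::'a set))"
    using assms(2) by (intro finite_Int disjI2 finite_PiE) auto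
  ultimately show ?thesis unfolding cylinder_eq_UN_points by (intro sets.finite_UN) auto
qed

lemma space_Omega [simp]: "space Omega = UNIV"
  unfolding Omega_def by (simp add: space_PiM PiE_UNIV_domain)

lemma coordinate_event_in_Omega: "{\<omega>::'v \<Rightarrow> 'a. \<omega> x = a} \<in> sets Omega"
proof -
  have "(\<lambda>\<omega>::'v \<Rightarrow> 'a. \<omega> x) \<in> measurable Omega (count_space UNIV)"
    unfolding Omega_def by (rule measurable_component_singleton) auto
  from measurable_sets[OF this, of "{a}"] show ?thesis by (simp add: vimage_def)
qed

lemma sets_coord_sigma: "sets (coord_sigma D) = sigma_sets UNIV {{\<omega>. \<omega> x = a} | x a. x \<in> D}"
  unfolding coord_sigma_def by (rule sets_measure_of) auto

lemma space_coord_sigma [simp]: "space (coord_sigma D) = UNIV"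
  unfolding coord_sigma_def by (rule space_measure_of) auto

lemma sets_coord_sigma_subset: "sets (coord_sigma D) \<subseteq> sets (Omega :: ('v \<Rightarrow> 'a) measure)"
  unfolding sets_coord_sigma
  by (rule sets.sigma_sets_subset') (auto simp: coordinate_event_in_Omega simp flip: space_Omega)

lemma cylinder_in_coord_sigma:
  "finite F \<Longrightarrow> F \<subseteq> D \<Longrightarrow> cylinder F B \<in> sets (coord_sigma D :: ('v \<Rightarrow> 'a::finite) measure)"
  by (rule cylinder_in_sets) (auto simp: sets_coord_sigma)

lemma cylinders_subset_Omega: "cylinders \<subseteq> sets (Omega :: ('v \<Rightarrow> 'a::finite) measure)"
  unfolding cylinders_def by (auto intro!: cylinder_in_sets simp: coordinate_event_in_Omega)

lemma sets_Omega_generated: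
  fixes E :: "('v \<Rightarrow> 'a::finite) set set"
  assumes "\<And>i B. cylinder {i} B \<in> E" and "E \<subseteq> cylinders"
  shows "sets Omega = sigma_sets UNIV E"
proof
  have "sets (Omega :: ('v \<Rightarrow> 'a) measure) = sigma_sets UNIV
      {{f \<in> \<Pi>\<^sub>E i\<in>UNIV. space (count_space UNIV). f i \<in> A} | i A. i \<in> UNIV \<and> A \<in> sets (count_space UNIV)}"
    unfolding Omega_def sets_PiM_single by (simp add: PiE_UNIV_domain)
  also have "\<dots> \<subseteq> sigma_sets UNIV E"
  proof (rule sigma_sets_mono, safe)
    fix i :: 'v and A :: "'a set"
    have "{f \<in> \<Pi>\<^sub>E i\<in>UNIV. space (count_space UNIV). f i \<in> A} = cylinder {i} {h. h i \<in> A}"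
      by (auto simp: cylinder_def PiE_UNIV_domain)
    then show "{f \<in> \<Pi>\<^sub>E i\<in>UNIV. space (count_space UNIV). f i \<in> A} \<in> sigma_sets UNIV E"
      by (simp only:) (rule sigma_sets.Basic[OF assms(1)])
  qed
  finally show "sets Omega \<subseteq> sigma_sets UNIV E" .
  show "sigma_sets UNIV E \<subseteq> sets Omega"
    using assms(2) cylinders_subset_Omega
    by (intro sets.sigma_sets_subset') (auto simp flip: space_Omega)
qed

lemma sets_Omega_eq_sigma_cylinders:
  "sets (Omega :: ('v \<Rightarrow> 'a::finite) measure) = sigma_sets UNIV cylinders"
  by (rule sets_Omega_generated) (simp_all add: cylinder_in_cylinders)

lemma topspace_Omega_top [simp]: "topspace Omega_top = UNIV"
  unfolding Omega_top_def by (simp add: PiE_UNIV_domain)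

lemma compact_space_Omega_top: "compact_space (Omega_top :: ('v \<Rightarrow> 'a::finite) topology)"
  unfolding Omega_top_def
  by (simp add: compact_space_product_topology compact_space_discrete_topology)

lemma openin_cylinder:
  fixes F :: "'v set" and B :: "('v \<Rightarrow> 'a) set"
  assumes "finite F" shows "openin Omega_top (cylinder F B)"
proof -
  have box: "{\<omega>. \<forall>x\<in>F. \<omega> x = h x} = PiE UNIV (\<lambda>x. if x \<in> F then {h x} else UNIV)"
    for h :: "'v \<Rightarrow> 'a"
    by (auto simp: PiE_UNIV_domain PiE_iff split: if_splits)
  have "openin Omega_top (PiE UNIV (\<lambda>x. if x \<in> F then {h x} else UNIV))" for h :: "'v \<Rightarrow> 'a"
    unfolding Omega_top_def openin_PiE_gen using assms by (auto intro: finite_subset[of _ F])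
  then show ?thesis
    unfolding cylinder_eq_UN_points box by (intro openin_Union) auto
qed

lemma closedin_cylinder: "finite F \<Longrightarrow> closedin Omega_top (cylinder F B)"
  unfolding closedin_def by (simp add: Compl_eq_Diff_UNIV[symmetric] Compl_cylinder openin_cylinder)

lemma openin_cylinders: "C \<in> cylinders \<Longrightarrow> openin Omega_top C"
  by (auto simp: cylinders_def openin_cylinder)

text \<open>Cylinders are clopen in a compact space.\<close>
lemma cylinder_disjoint_UN_finite:
  fixes A :: "nat \<Rightarrow> ('v \<Rightarrow> 'a::finite) set"
  assumes "range A \<subseteq> cylinders" "disjoint_family A" "\<Union>(range A) \<in> cylinders"
  obtains N where "\<And>i. i \<ge> N \<Longrightarrow> A i = {}"
proof -
  obtain F B where "finite F" and eq: "\<Union>(range A) = cylinder F B"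
    using assms(3) unfolding cylinders_def by auto
  then have "compactin Omega_top (\<Union>(range A))"
    unfolding eq by (intro closedin_compact_space[OF compact_space_Omega_top] closedin_cylinder)
  moreover have "openin Omega_top C" if "C \<in> range A" for C
    using that assms(1) openin_cylinders by blast
  ultimately obtain V where V: "finite V" "V \<subseteq> range A" "\<Union>(range A) \<subseteq> \<Union>V"
    using compactinD[of Omega_top "\<Union>(range A)" "range A"] by blast
  then obtain K where K: "finite K" "V = A ` K" by (metis finite_subset_image)
  then obtain N where N: "K \<subseteq> {..<N}" using finite_nat_bounded by blast
  have "A i = {}" if "i \<ge> N" for i
  proof -
    have "A i \<inter> A j = {}" if "j \<in> K" for j
    proof -
      have "i \<noteq> j" using N that \<open>i \<ge> N\<close> by auto
      then show ?thesis using assms(2) by (simp add: disjoint_family_on_def)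
    qed
    then show ?thesis using V K by blast
  qed
  then show ?thesis using that by blast
qed

lemma countably_additive_cylinders:
  fixes f :: "('v \<Rightarrow> 'a::finite) set \<Rightarrow> ennreal"
  assumes pos: "positive cylinders f" and add: "additive cylinders f"
  shows "countably_additive cylinders f"
  unfolding countably_additive_def
proof (intro allI impI)
  fix A :: "nat \<Rightarrow> ('v \<Rightarrow> 'a) set"
  assume A: "range A \<subseteq> cylinders" "disjoint_family A" "\<Union>(range A) \<in> cylinders"
  obtain N where N: "\<And>i. i \<ge> N \<Longrightarrow> A i = {}"
    using cylinder_disjoint_UN_finite[OF A] by blast
  have ring: "ring_of_sets UNIV (cylinders :: ('v \<Rightarrow> 'a) set set)"
    using algebra_cylinders by (rule algebra.axioms)
  have "(\<Sum>i. f (A i)) = (\<Sum>i<N. f (A i))"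
    by (rule suminf_finite) (use N pos in \<open>auto simp: positive_def\<close>)
  also have "\<dots> = f (\<Union>i<N. A i)"
    by (rule ring_of_sets.additive_sum[OF ring pos add]) (use A in \<open>auto simp: disjoint_family_on_def\<close>)
  also have "(\<Union>i<N. A i) = \<Union>(range A)"
  proof (intro equalityI subsetI)
    fix x assume "x \<in> \<Union>(range A)"
    then obtain i where "x \<in> A i" by blast
    then have "i < N" using N[of i] by (auto simp: not_less[symmetric])
    then show "x \<in> (\<Union>i<N. A i)" using \<open>x \<in> A i\<close> by blast
  qed auto
  finally show "(\<Sum>i. f (A i)) = f (\<Union>(range A))" .
qed

section \<open>Limits of cylinder probabilities\<close>

lemma bounded_double_seq_diagonal_subseq:
  fixes f :: "nat \<Rightarrow> nat \<Rightarrow> real"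
  assumes bounded: "\<And>n k. \<bar>f n k\<bar> \<le> M"
  obtains d where "strict_mono d" "\<And>k. convergent (\<lambda>n. f (d n) k)"
proof -
  interpret subseqs "\<lambda>k s. convergent (\<lambda>n. f (s n) k)"
  proof
    fix k :: nat and s :: "nat \<Rightarrow> nat"
    have "f (s n) k \<in> {-M..M}" for n
      using bounded[of "s n" k] by (simp add: abs_le_iff)
    then obtain l s' where "strict_mono s'" "((\<lambda>n. f (s n) k) \<circ> s') \<longlonglongrightarrow> l"
      using compact_Icc compact_imp_seq_compact seq_compactE by metis
    then show "\<exists>s'. strict_mono s' \<and> convergent (\<lambda>n. f ((s \<circ> s') n) k)"
      by (auto simp: comp_def convergent_def)
  qed
  have "convergent (\<lambda>n. f (diagseq n) k)" for k
  proof -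
    let ?r = "\<lambda>n. fold_reduce (Suc k) n (Suc k + n)"
    have "convergent ((\<lambda>n. f (seqseq (Suc k) n) k) \<circ> ?r)"
      by (intro convergent_subseq_convergent seqseq_holds subseq_diagonal_rest)
    then have "convergent (\<lambda>n. f ((diagseq \<circ> (+) (Suc k)) n) k)"
      unfolding diagseq_seqseq by (simp add: comp_def)
    then obtain L where "(\<lambda>n. f (diagseq (n + Suc k)) k) \<longlonglongrightarrow> L"
      by (auto simp: convergent_def add.commute)
    then show ?thesis
      using LIMSEQ_offset convergent_def by blast
  qed
  then show ?thesis using that subseq_diagseq by blast
qed

lemma convergent_subseq_on_cylinders:
  fixes \<mu> :: "nat \<Rightarrow> ('v::countable \<Rightarrow> 'a::finite) measure"
  assumes "\<And>n. prob_space (\<mu> n)"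
  obtains d where "strict_mono d" "\<And>C. C \<in> cylinders \<Longrightarrow> convergent (\<lambda>n. measure (\<mu> (d n)) C)"
proof -
  let ?C = "from_nat_into (cylinders :: ('v \<Rightarrow> 'a) set set)"
  obtain d where d: "strict_mono d" "\<And>k. convergent (\<lambda>n. measure (\<mu> (d n)) (?C k))"
    using bounded_double_seq_diagonal_subseq[of "\<lambda>n k. measure (\<mu> n) (?C k)" 1]
    by (metis abs_of_nonneg assms measure_nonneg prob_space.prob_le_1)
  have "convergent (\<lambda>n. measure (\<mu> (d n)) C)" if "C \<in> cylinders" for C
    using d(2)[of "to_nat_on cylinders C"]
    by (simp add: from_nat_into_to_nat_on[OF countable_cylinders that])
  then show ?thesis using that d(1) by blast
qed

lemma cylinder_limit_content:
  fixes \<mu> :: "nat \<Rightarrow> ('v \<Rightarrow> 'a::finite) measure" and l :: "('v \<Rightarrow> 'a) set \<Rightarrow> real"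
  assumes prob: "\<And>n. prob_space (\<mu> n)" and sets: "\<And>n. sets (\<mu> n) = sets Omega"
    and l: "\<And>C. C \<in> cylinders \<Longrightarrow> (\<lambda>n. measure (\<mu> n) C) \<longlonglongrightarrow> l C"
  shows "positive cylinders (\<lambda>C. ennreal (l C))" and "additive cylinders (\<lambda>C. ennreal (l C))"
proof -
  show "positive cylinders (\<lambda>C. ennreal (l C))"
    using l[OF cylinders_closed(1)] by (simp add: positive_def LIMSEQ_const_iff)
  show "additive cylinders (\<lambda>C. ennreal (l C))"
  proof (unfold additive_def, intro ballI impI)
    fix A B :: "('v \<Rightarrow> 'a) set" assume A: "A \<in> cylinders" and B: "B \<in> cylinders" and "A \<inter> B = {}"
    then have "measure (\<mu> n) (A \<union> B) = measure (\<mu> n) A + measure (\<mu> n) B" for n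
      using prob sets cylinders_subset_Omega
      by (intro finite_measure.finite_measure_Union) (auto simp: prob_space_def)
    then have "(\<lambda>n. measure (\<mu> n) (A \<union> B)) \<longlonglongrightarrow> l A + l B"
      using tendsto_add[OF l[OF A] l[OF B]] by simp
    then have "l (A \<union> B) = l A + l B"
      using LIMSEQ_unique l cylinders_closed(3)[OF A B] by blast
    moreover have "0 \<le> l A" "0 \<le> l B"
      using LIMSEQ_le_const[OF l] A B by auto
    ultimately show "ennreal (l (A \<union> B)) = ennreal (l A) + ennreal (l B)"
      by (simp add: ennreal_plus)
  qed
qed

text \<open>The limit content is countably additive by compactness, so Caratheodory extends it.\<close>
lemma cylinder_limit_measure:
  fixes \<mu> :: "nat \<Rightarrow> ('v \<Rightarrow> 'a::finite) measure"
  assumes prob: "\<And>n. prob_space (\<mu> n)" and sets: "\<And>n. sets (\<mu> n) = sets Omega"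
    and conv: "\<And>C. C \<in> cylinders \<Longrightarrow> convergent (\<lambda>n. measure (\<mu> n) C)"
  obtains \<nu> where "prob_space \<nu>" "sets \<nu> = sets Omega"
    "\<And>C. C \<in> cylinders \<Longrightarrow> (\<lambda>n. measure (\<mu> n) C) \<longlonglongrightarrow> measure \<nu> C"
proof -
  define l where "l C = lim (\<lambda>n. measure (\<mu> n) C)" for C
  have l: "(\<lambda>n. measure (\<mu> n) C) \<longlonglongrightarrow> l C" if "C \<in> cylinders" for C
    unfolding l_def using conv[OF that] by (simp add: convergent_LIMSEQ_iff)
  have "measure (\<mu> n) UNIV = 1" for n
    using prob_space.prob_space[OF prob] sets_eq_imp_space_eq[OF sets] by simp
  then have l_UNIV: "l UNIV = 1"
    using l[OF cylinders_closed(2)] by (simp add: LIMSEQ_const_iff)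
  note content = cylinder_limit_content[OF prob sets l]
  obtain \<mu>' where \<mu>': "\<And>C. C \<in> cylinders \<Longrightarrow> \<mu>' C = ennreal (l C)"
    "measure_space UNIV (sigma_sets UNIV cylinders) \<mu>'"
    using ring_of_sets.caratheodory'[OF algebra.axioms(1)[OF algebra_cylinders] content(1)]
      countably_additive_cylinders[OF content] by metis
  define \<nu> where "\<nu> = measure_of UNIV (sigma_sets UNIV cylinders) \<mu>'"
  have sigma: "sigma_algebra UNIV (sigma_sets UNIV (cylinders :: ('v \<Rightarrow> 'a) set set))"
    using \<mu>'(2) by (simp add: measure_space_def)
  have sets_\<nu>: "sets \<nu> = sets Omega"
    unfolding \<nu>_def sets_Omega_eq_sigma_cylinders by (rule sigma_algebra.sets_measure_of_eq[OF sigma])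
  have emeasure_\<nu>: "emeasure \<nu> C = ennreal (l C)" if "C \<in> cylinders" for C
    using \<mu>' that unfolding \<nu>_def
    by (subst emeasure_measure_of_sigma[OF sigma]) (auto simp: measure_space_def)
  have "prob_space \<nu>"
    using emeasure_\<nu>[OF cylinders_closed(2)] sets_eq_imp_space_eq[OF sets_\<nu>]
    by (intro prob_spaceI) (simp add: l_UNIV)
  moreover have "measure \<nu> C = l C" if "C \<in> cylinders" for C
    using emeasure_\<nu>[OF that] LIMSEQ_le_const[OF l[OF that]] by (simp add: measure_def)
  ultimately show ?thesis using that sets_\<nu> l by auto
qed

section \<open>Continuous functions of a configuration\<close>

lemma continuous_map_Omega_top_locally_determined:
  fixes h :: "('v \<Rightarrow> 'a) \<Rightarrow> real"
  assumes "continuous_map Omega_top euclideanreal h" "e > 0"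
  shows "\<exists>F. finite F \<and> (\<forall>\<omega>'. restrict \<omega>' F = restrict \<omega> F \<longrightarrow> \<bar>h \<omega>' - h \<omega>\<bar> < e)"
proof -
  let ?U = "{\<omega>' \<in> topspace Omega_top. h \<omega>' \<in> ball (h \<omega>) e}"
  have "openin Omega_top ?U"
    by (rule openin_continuous_map_preimage[OF assms(1)]) simp
  moreover have "\<omega> \<in> ?U" using assms(2) by simp
  ultimately have "\<exists>W. finite {x \<in> UNIV. W x \<noteq> topspace (discrete_topology UNIV)} \<and>
      (\<forall>x\<in>UNIV. openin (discrete_topology UNIV) (W x)) \<and> \<omega> \<in> PiE UNIV W \<and> PiE UNIV W \<subseteq> ?U"
    unfolding Omega_top_def openin_product_topology_alt by blast
  then obtain W where W: "finite {x. W x \<noteq> UNIV}" "PiE UNIV W \<subseteq> ?U" "\<omega> \<in> PiE UNIV W"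
    by auto
  have "\<bar>h \<omega>' - h \<omega>\<bar> < e" if "restrict \<omega>' {x. W x \<noteq> UNIV} = restrict \<omega> {x. W x \<noteq> UNIV}" for \<omega>'
  proof -
    have "\<omega>' x \<in> W x" for x
      using W(3) fun_cong[OF that, of x] by (cases "W x = UNIV") (auto simp: PiE_iff)
    then have "\<omega>' \<in> ?U" using W(2) by (auto simp: PiE_UNIV_domain)
    then show ?thesis by (simp add: dist_real_def abs_minus_commute)
  qed
  then show ?thesis using W(1) by blast
qed

text \<open>The pointwise moduli are made uniform by compactness.\<close>
lemma continuous_map_Omega_top_uniformly_locally_determined:
  fixes h :: "('v \<Rightarrow> 'a::finite) \<Rightarrow> real"
  assumes "continuous_map Omega_top euclideanreal h" "e > 0"
  obtains F where "finite F" "\<And>\<omega> \<omega>'. restrict \<omega>' F = restrict \<omega> F \<Longrightarrow> \<bar>h \<omega>' - h \<omega>\<bar> < e"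
proof -
  have "\<forall>\<omega>. \<exists>G. finite G \<and> (\<forall>\<omega>'. restrict \<omega>' G = restrict \<omega> G \<longrightarrow> \<bar>h \<omega>' - h \<omega>\<bar> < e / 2)"
    using continuous_map_Omega_top_locally_determined[OF assms(1) half_gt_zero[OF assms(2)]] by blast
  then have "\<exists>G. \<forall>\<omega>. finite (G \<omega>) \<and>
      (\<forall>\<omega>'. restrict \<omega>' (G \<omega>) = restrict \<omega> (G \<omega>) \<longrightarrow> \<bar>h \<omega>' - h \<omega>\<bar> < e / 2)"
    by (rule choice)
  then obtain G where G: "\<And>\<omega>. finite (G \<omega>)"
    "\<And>\<omega> \<omega>'. restrict \<omega>' (G \<omega>) = restrict \<omega> (G \<omega>) \<Longrightarrow> \<bar>h \<omega>' - h \<omega>\<bar> < e / 2"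
    by blast
  let ?nbhd = "\<lambda>\<omega>. cylinder (G \<omega>) {restrict \<omega> (G \<omega>)}"
  have "compactin Omega_top (topspace (Omega_top :: ('v \<Rightarrow> 'a) topology))"
    using compact_space_Omega_top by (simp add: compact_space_def)
  moreover have "openin Omega_top U" if "U \<in> range ?nbhd" for U
    using that G(1) openin_cylinder by blast
  moreover have "topspace Omega_top \<subseteq> \<Union>(range ?nbhd)"
    by (auto simp: cylinder_def)
  ultimately obtain V where "finite V" "V \<subseteq> range ?nbhd" "topspace Omega_top \<subseteq> \<Union>V"
    using compactinD[of Omega_top "topspace Omega_top" "range ?nbhd"] by blast
  then obtain K where K: "finite K" "topspace Omega_top \<subseteq> (\<Union>\<omega>\<in>K. ?nbhd \<omega>)"
    using finite_subset_image[of V ?nbhd UNIV] by blast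
  define F where "F = (\<Union>\<omega>\<in>K. G \<omega>)"
  have "\<bar>h \<omega>' - h \<omega>\<bar> < e" if "restrict \<omega>' F = restrict \<omega> F" for \<omega> \<omega>'
  proof -
    obtain \<kappa> where "\<kappa> \<in> K" and \<omega>: "restrict \<omega> (G \<kappa>) = restrict \<kappa> (G \<kappa>)"
      using K(2) by (auto simp: cylinder_def)
    have "G \<kappa> \<subseteq> F" using \<open>\<kappa> \<in> K\<close> by (auto simp: F_def)
    then have "restrict \<omega>' (G \<kappa>) = restrict \<omega> (G \<kappa>)"
      using that by (metis restrict_restrict inf.absorb_iff2)
    then have "\<bar>h \<omega>' - h \<kappa>\<bar> < e / 2" "\<bar>h \<omega> - h \<kappa>\<bar> < e / 2"
      using G(2) \<omega> by auto
    then show ?thesis by linarith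
  qed
  moreover have "finite F" using K(1) G(1) by (simp add: F_def)
  ultimately show ?thesis using that by blast
qed

lemma integral_restrict_eq_sum:
  fixes h :: "('v \<Rightarrow> 'a::finite) \<Rightarrow> real"
  assumes "finite_measure M" "sets M = sets Omega" "finite F"
  shows "integrable M (\<lambda>\<omega>. h (restrict \<omega> F))"
    and "(\<integral>\<omega>. h (restrict \<omega> F) \<partial>M) = (\<Sum>t\<in>PiE F (\<lambda>_. UNIV). h t * measure M (cylinder F {t}))"
proof -
  let ?T = "PiE F (\<lambda>_. UNIV :: 'a set)"
  have fin: "finite ?T" using assms(3) by (simp add: finite_PiE)
  have cyl: "cylinder F {t} \<in> sets M" for t
    using assms(2,3) cylinders_subset_Omega cylinder_in_cylinders by blast
  have eq: "h (restrict \<omega> F) = (\<Sum>t\<in>?T. h t * indicator (cylinder F {t}) \<omega>)" for \<omega>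
  proof -
    have "(\<Sum>t\<in>?T. h t * indicator (cylinder F {t}) \<omega>) = (\<Sum>t\<in>?T. if t = restrict \<omega> F then h t else 0)"
      by (intro sum.cong) (auto simp: cylinder_def)
    also have "\<dots> = h (restrict \<omega> F)" using fin by (simp add: sum.delta')
    finally show ?thesis by simp
  qed
  have int: "integrable M (\<lambda>\<omega>. h t * indicator (cylinder F {t}) \<omega>)" for t
    using cyl finite_measure.emeasure_finite[OF assms(1)]
    by (intro integrable_mult_right integrable_real_indicator) (auto simp: top.not_eq_extremum)
  show "integrable M (\<lambda>\<omega>. h (restrict \<omega> F))"
    unfolding eq by (rule Bochner_Integration.integrable_sum) (rule int)
  show "(\<integral>\<omega>. h (restrict \<omega> F) \<partial>M) = (\<Sum>t\<in>?T. h t * measure M (cylinder F {t}))"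
    unfolding eq using cyl by (subst Bochner_Integration.integral_sum[OF int]) simp
qed

text \<open>Approximate \<open>h\<close> uniformly by a function of finitely many coordinates, whose integral is a
  finite combination of cylinder probabilities.\<close>
lemma integral_tendsto_of_cylinders_tendsto:
  fixes h :: "('v \<Rightarrow> 'a::finite) \<Rightarrow> real"
  assumes cont: "continuous_map Omega_top euclideanreal h"
    and meas: "h \<in> borel_measurable Omega" and bounded: "\<And>\<omega>. \<bar>h \<omega>\<bar> \<le> B"
    and prob: "\<And>n. prob_space (\<mu> n)" "prob_space \<nu>"
    and sets: "\<And>n. sets (\<mu> n) = sets Omega" "sets \<nu> = sets Omega"
    and conv: "\<And>C. C \<in> cylinders \<Longrightarrow> (\<lambda>n. measure (\<mu> n) C) \<longlonglongrightarrow> measure \<nu> C"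
  shows "(\<lambda>n. \<integral>\<omega>. h \<omega> \<partial>\<mu> n) \<longlonglongrightarrow> (\<integral>\<omega>. h \<omega> \<partial>\<nu>)"
proof (rule LIMSEQ_I)
  fix r :: real assume "r > 0"
  then obtain F where F: "finite F" "\<And>\<omega> \<omega>'. restrict \<omega>' F = restrict \<omega> F \<Longrightarrow> \<bar>h \<omega>' - h \<omega>\<bar> < r / 3"
    using continuous_map_Omega_top_uniformly_locally_determined[OF cont, of "r / 3"] by auto
  define c where "c M = (\<Sum>t\<in>PiE F (\<lambda>_. UNIV). h t * measure M (cylinder F {t}))" for M
  have approx: "\<bar>(\<integral>\<omega>. h \<omega> \<partial>M) - c M\<bar> \<le> r / 3" if "prob_space M" "sets M = sets Omega" for M
  proof -
    interpret prob_space M by fact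
    have int: "integrable M h"
      using meas bounded measurable_cong_sets[OF that(2) refl]
      by (intro integrable_const_bound[of _ B]) auto
    note trunc = integral_restrict_eq_sum[OF finite_measure_axioms that(2) F(1), of h]
    have "\<bar>(\<integral>\<omega>. h \<omega> \<partial>M) - c M\<bar> = \<bar>\<integral>\<omega>. h \<omega> - h (restrict \<omega> F) \<partial>M\<bar>"
      using trunc by (simp add: c_def int)
    also have "\<dots> \<le> (\<integral>\<omega>. \<bar>h \<omega> - h (restrict \<omega> F)\<bar> \<partial>M)"
      by (rule integral_abs_bound)
    also have "\<dots> \<le> (\<integral>\<omega>. r / 3 \<partial>M)"
      using F(2)[of "restrict _ F"] trunc(1) int
      by (intro integral_mono) (auto intro!: less_imp_le simp: abs_minus_commute)
    finally show ?thesis by (simp add: prob_space)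
  qed
  have "(\<lambda>n. c (\<mu> n)) \<longlonglongrightarrow> c \<nu>"
    unfolding c_def by (intro tendsto_sum tendsto_mult_left conv cylinder_in_cylinders F(1))
  then obtain N where N: "\<And>n. n \<ge> N \<Longrightarrow> \<bar>c (\<mu> n) - c \<nu>\<bar> < r / 3"
    using LIMSEQ_D[of _ "c \<nu>" "r / 3"] \<open>r > 0\<close> by auto
  have "\<bar>(\<integral>\<omega>. h \<omega> \<partial>\<mu> n) - (\<integral>\<omega>. h \<omega> \<partial>\<nu>)\<bar> < r" if "n \<ge> N" for n
    using approx[OF prob(1) sets(1), of n] approx[OF prob(2) sets(2)] N[OF that] by linarith
  then show "\<exists>N. \<forall>n\<ge>N. norm ((\<integral>\<omega>. h \<omega> \<partial>\<mu> n) - (\<integral>\<omega>. h \<omega> \<partial>\<nu>)) < r" by auto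
qed

section \<open>Proper \<open>q\<close>-kernels acting on product measures\<close>

lemma space_PiM_Omega:
  assumes "sets m = sets Omega"
  shows "space (PiM I (\<lambda>_. m)) = PiE I (\<lambda>_. UNIV)"
  using sets_eq_imp_space_eq[OF assms] by (simp add: space_PiM)

lemma space_Omega_q: "space (Omega_q q) = PiE {..<q} (\<lambda>_. UNIV)"
  unfolding Omega_q_def by (simp add: space_PiM_Omega)

lemma sets_PiM_Omega_q:
  "sets m = sets Omega \<Longrightarrow> sets (PiM {..<q} (\<lambda>_. m)) = sets (Omega_q q)"
  unfolding Omega_q_def by (rule sets_PiM_cong) auto

lemma measurable_PiM_Omega_q_iff:
  assumes "sets m = sets Omega"
  shows "f \<in> measurable (PiM {..<q} (\<lambda>_. m)) N \<longleftrightarrow> f \<in> measurable (Omega_q q) N"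
  by (simp only: measurable_cong_sets[OF sets_PiM_Omega_q[OF assms] refl])

lemma measurable_ident_coord_sigma: "(\<lambda>\<omega>. \<omega>) \<in> measurable Omega (coord_sigma D)"
  unfolding coord_sigma_def
  by (rule measurable_measure_of) (auto simp: coordinate_event_in_Omega)

lemma measurable_ident_PiM_coord_sigma:
  "(\<lambda>\<eta>. \<eta>) \<in> measurable (Omega_q q) (PiM {..<q} (\<lambda>_. coord_sigma D))"
proof (rule measurable_PiM_single')
  fix i assume "i \<in> {..<q}"
  then have "(\<lambda>\<eta>. \<eta> i) \<in> measurable (Omega_q q) Omega"
    unfolding Omega_q_def by (rule measurable_component_singleton)
  then show "(\<lambda>\<eta>. \<eta> i) \<in> measurable (Omega_q q) (coord_sigma D)"
    using measurable_ident_coord_sigma by (rule measurable_compose)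
qed (simp add: space_Omega_q)

lemma proper_prob_qkernelD:
  assumes "proper_prob_qkernel q L k" "\<eta> \<in> space (Omega_q q)"
  shows "prob_space (k \<eta>)" "sets (k \<eta>) = sets Omega"
    and "A \<in> sets (coord_sigma (- L)) \<Longrightarrow> measure (k \<eta>) A = (\<Sum>i<q. indicator A (\<eta> i)) / q"
  using assms unfolding proper_prob_qkernel_def by auto

lemma measurable_proper_prob_qkernel:
  assumes "proper_prob_qkernel q L k" "A \<in> sets Omega"
  shows "(\<lambda>\<eta>. measure (k \<eta>) A) \<in> borel_measurable (Omega_q q)"
proof -
  have "(\<lambda>\<eta>. measure (k \<eta>) A) \<in> borel_measurable (PiM {..<q} (\<lambda>_. coord_sigma (- L)))"
    using assms unfolding proper_prob_qkernel_def by blast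
  with measurable_ident_PiM_coord_sigma show ?thesis by (rule measurable_compose)
qed

lemma proper_prob_qkernel_measurable_subprob_algebra:
  fixes k :: "(nat \<Rightarrow> 'v \<Rightarrow> 'a) \<Rightarrow> ('v \<Rightarrow> 'a) measure"
  assumes "proper_prob_qkernel q L k" "sets m = sets Omega"
  shows "k \<in> measurable (PiM {..<q} (\<lambda>_. m)) (subprob_algebra Omega)"
proof (rule measurable_subprob_algebra)
  fix \<eta> assume "\<eta> \<in> space (PiM {..<q} (\<lambda>_. m))"
  then have \<eta>: "\<eta> \<in> space (Omega_q q)" by (simp add: space_PiM_Omega[OF assms(2)] space_Omega_q)
  show "subprob_space (k \<eta>)" "sets (k \<eta>) = sets Omega"
    using proper_prob_qkernelD[OF assms(1) \<eta>] by (auto simp: prob_space_imp_subprob_space)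
next
  fix A :: "('v \<Rightarrow> 'a) set" assume "A \<in> sets Omega"
  then have "(\<lambda>\<eta>. ennreal (measure (k \<eta>) A)) \<in> borel_measurable (Omega_q q)"
    using measurable_proper_prob_qkernel[OF assms(1)] by measurable
  moreover have "emeasure (k \<eta>) A = ennreal (measure (k \<eta>) A)" if "\<eta> \<in> space (Omega_q q)" for \<eta>
    using proper_prob_qkernelD(1)[OF assms(1) that] by (simp add: prob_space_def finite_measure.emeasure_eq_measure)
  ultimately have "(\<lambda>\<eta>. emeasure (k \<eta>) A) \<in> borel_measurable (Omega_q q)"
    by (rule measurable_cong[THEN iffD2, rotated])
  then show "(\<lambda>\<eta>. emeasure (k \<eta>) A) \<in> borel_measurable (PiM {..<q} (\<lambda>_. m))"
    by (simp only: measurable_PiM_Omega_q_iff[OF assms(2)])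
qed

definition qbind ::
  "nat \<Rightarrow> ('v \<Rightarrow> 'a) measure \<Rightarrow> ((nat \<Rightarrow> 'v \<Rightarrow> 'a) \<Rightarrow> ('v \<Rightarrow> 'a) measure) \<Rightarrow> ('v \<Rightarrow> 'a) measure" where
  "qbind q \<mu> k = PiM {..<q} (\<lambda>_. \<mu>) \<bind> k"

lemma
  assumes "proper_prob_qkernel q L k" "prob_space m" "sets m = sets Omega"
  shows prob_space_qbind: "prob_space (qbind q m k)"
    and sets_qbind: "sets (qbind q m k) = sets Omega"
    and emeasure_qbind: "A \<in> sets Omega \<Longrightarrow>
      emeasure (qbind q m k) A = (\<integral>\<^sup>+\<eta>. emeasure (k \<eta>) A \<partial>PiM {..<q} (\<lambda>_. m))"
    and measure_qbind: "A \<in> sets Omega \<Longrightarrow>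
      measure (qbind q m k) A = (\<integral>\<eta>. measure (k \<eta>) A \<partial>PiM {..<q} (\<lambda>_. m))"
proof -
  interpret P: prob_space "PiM {..<q} (\<lambda>_. m)"
    using assms(2) by (rule prob_space_PiM)
  note k = proper_prob_qkernel_measurable_subprob_algebra[OF assms(1,3)]
  have "\<eta> \<in> space (Omega_q q)" if "\<eta> \<in> space (PiM {..<q} (\<lambda>_. m))" for \<eta>
    using that by (simp add: space_PiM_Omega[OF assms(3)] space_Omega_q)
  note kernel = proper_prob_qkernelD[OF assms(1) this]
  show "prob_space (qbind q m k)"
    unfolding qbind_def using kernel by (intro P.prob_space_bind[OF _ k]) auto
  show "sets (qbind q m k) = sets Omega"
    unfolding qbind_def using kernel P.not_empty by (intro sets_bind) auto
  show "A \<in> sets Omega \<Longrightarrow> emeasure (qbind q m k) A = (\<integral>\<^sup>+\<eta>. emeasure (k \<eta>) A \<partial>PiM {..<q} (\<lambda>_. m))"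
    unfolding qbind_def using P.not_empty by (intro emeasure_bind[OF _ k])
  show "A \<in> sets Omega \<Longrightarrow> measure (qbind q m k) A = (\<integral>\<eta>. measure (k \<eta>) A \<partial>PiM {..<q} (\<lambda>_. m))"
    unfolding qbind_def by (intro P.measure_bind[OF k])
qed

lemma q_specification_qbind:
  assumes "q_specification q \<gamma>" "L \<subseteq> D" "finite D" "\<eta> \<in> space (Omega_q q)"
  shows "qbind q (\<gamma> D \<eta>) (\<gamma> L) = \<gamma> D \<eta>"
proof -
  have proper: "proper_prob_qkernel q L' (\<gamma> L')" if "finite L'" for L'
    using assms(1) that by (simp add: q_specification_def)
  note D = proper_prob_qkernelD[OF proper[OF assms(3)] assms(4)]
  have L: "proper_prob_qkernel q L (\<gamma> L)"
    using proper assms(2,3) finite_subset by blast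
  show ?thesis
  proof (rule measure_eqI)
    show "sets (qbind q (\<gamma> D \<eta>) (\<gamma> L)) = sets (\<gamma> D \<eta>)"
      using sets_qbind[OF L D(1,2)] D(2) by simp
    fix A assume "A \<in> sets (qbind q (\<gamma> D \<eta>) (\<gamma> L))"
    then have "A \<in> sets Omega" using sets_qbind[OF L D(1,2)] by simp
    then show "emeasure (qbind q (\<gamma> D \<eta>) (\<gamma> L)) A = emeasure (\<gamma> D \<eta>) A"
      using assms unfolding emeasure_qbind[OF L D(1,2) \<open>A \<in> sets Omega\<close>] q_specification_def kernel_comp_def
      by blast
  qed
qed

lemma Gq_qbindI:
  fixes \<gamma> :: "'v set \<Rightarrow> (nat \<Rightarrow> 'v \<Rightarrow> 'a) \<Rightarrow> ('v \<Rightarrow> 'a) measure"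
  assumes "q_specification q \<gamma>" "prob_space \<nu>" "sets \<nu> = sets Omega"
    and "\<And>L. finite L \<Longrightarrow> qbind q \<nu> (\<gamma> L) = \<nu>"
  shows "\<nu> \<in> Gq q \<gamma>"
  unfolding Gq_def
proof (intro CollectI conjI assms(2,3) allI impI ballI)
  fix L :: "'v set" and A :: "('v \<Rightarrow> 'a) set" assume "finite L" "A \<in> sets Omega"
  moreover have "proper_prob_qkernel q L (\<gamma> L)"
    using assms(1) \<open>finite L\<close> by (simp add: q_specification_def)
  ultimately show "(\<integral>\<^sup>+\<eta>. emeasure (\<gamma> L \<eta>) A \<partial>PiM {..<q} (\<lambda>_. \<nu>)) = emeasure \<nu> A"
    using emeasure_qbind[OF _ assms(2,3)] assms(4) by metis
qed

section \<open>Proper kernels as averages over diagonal boundary conditions\<close>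

definition self_maps :: "nat \<Rightarrow> (nat \<Rightarrow> nat) set" where
  "self_maps q = PiE {..<q} (\<lambda>_. {..<q})"

definition reindex :: "nat \<Rightarrow> (nat \<Rightarrow> 'b) \<Rightarrow> (nat \<Rightarrow> nat) \<Rightarrow> nat \<Rightarrow> 'b" where
  "reindex q \<eta> J = (\<lambda>i\<in>{..<q}. \<eta> (J i))"

lemma finite_self_maps: "finite (self_maps q)"
  unfolding self_maps_def by (simp add: finite_PiE)

lemma self_maps_not_empty: "self_maps q \<noteq> {}"
  unfolding self_maps_def by (auto simp: PiE_eq_empty_iff)

lemma card_self_maps: "card (self_maps q) = q ^ q"
  unfolding self_maps_def by (simp add: card_PiE)

lemma reindex_in_self_maps: "J \<in> self_maps q \<Longrightarrow> K \<in> self_maps q \<Longrightarrow> reindex q J K \<in> self_maps q"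
  unfolding self_maps_def reindex_def by (auto simp: PiE_iff)

lemma reindex_reindex: "K \<in> self_maps q \<Longrightarrow> reindex q (reindex q \<eta> J) K = reindex q \<eta> (reindex q J K)"
  unfolding self_maps_def reindex_def by (auto simp: PiE_iff)

lemma reindex_in_space_Omega_q: "reindex q \<eta> J \<in> space (Omega_q q)"
  unfolding reindex_def by (simp add: space_Omega_q)

lemma emeasure_PiM_proper_prob_qkernel_PiE:
  fixes k :: "(nat \<Rightarrow> 'v \<Rightarrow> 'a) \<Rightarrow> ('v \<Rightarrow> 'a) measure"
  assumes k: "proper_prob_qkernel q L k" and \<eta>: "\<eta> \<in> space (Omega_q q)"
    and B: "\<And>i. i < q \<Longrightarrow> B i \<in> sets (coord_sigma (- L))"
  shows "emeasure (PiM {..<q} (\<lambda>_. k \<eta>)) (PiE {..<q} B) =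
    ennreal (card (PiE {..<q} (\<lambda>i. {j \<in> {..<q}. \<eta> j \<in> B i})) / card (self_maps q))"
proof -
  note kernel = proper_prob_qkernelD[OF k \<eta>]
  interpret product_prob_space "\<lambda>_. k \<eta>" "{..<q}"
    using kernel(1) by (simp add: product_prob_space_def product_prob_space_axioms_def
        product_sigma_finite_def prob_space_imp_sigma_finite)
  have "B i \<in> sets (k \<eta>)" if "i < q" for i
    using B that sets_coord_sigma_subset kernel(2) by auto
  then have "emeasure (PiM {..<q} (\<lambda>_. k \<eta>)) (PiE {..<q} B) = (\<Prod>i<q. emeasure (k \<eta>) (B i))"
    by (intro emeasure_PiM) auto
  also have "\<dots> = (\<Prod>i<q. ennreal (card {j \<in> {..<q}. \<eta> j \<in> B i} / q))"
    using kernel B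
    by (intro prod.cong refl) (simp add: prob_space_def finite_measure.emeasure_eq_measure
        sum_of_bool_eq indicator_def Int_def)
  also have "\<dots> = ennreal ((\<Prod>i<q. real (card {j \<in> {..<q}. \<eta> j \<in> B i})) / (\<Prod>i<q. real q))"
    by (subst prod_ennreal) (simp_all add: prod_dividef)
  also have "\<dots> = ennreal (card (PiE {..<q} (\<lambda>i. {j \<in> {..<q}. \<eta> j \<in> B i})) / card (self_maps q))"
    by (simp only: card_PiE finite_lessThan card_self_maps of_nat_prod prod_constant of_nat_power
        card_lessThan)
  finally show ?thesis .
qed

text \<open>On \<open>coord_sigma (- L)\<close> a proper kernel at \<open>\<eta>\<close> is the empirical measure of
  \<open>\<eta> 0, \<dots>, \<eta> (q - 1)\<close>; hence on the product of these \<sigma>-algebras its \<open>q\<close>-th power is the law of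
  \<open>\<eta> \<circ> J\<close> for a uniformly random self map \<open>J\<close> of \<open>{..<q}\<close>.\<close>
lemma distr_PiM_proper_prob_qkernel:
  fixes k :: "(nat \<Rightarrow> 'v \<Rightarrow> 'a) \<Rightarrow> ('v \<Rightarrow> 'a) measure"
  assumes k: "proper_prob_qkernel q L k" and \<eta>: "\<eta> \<in> space (Omega_q q)"
  defines "Q \<equiv> PiM {..<q} (\<lambda>_. coord_sigma (- L))"
  shows "distr (PiM {..<q} (\<lambda>_. k \<eta>)) Q (\<lambda>\<zeta>. \<zeta>) =
    distr (measure_pmf (pmf_of_set (self_maps q))) Q (reindex q \<eta>)"
proof -
  note kernel = proper_prob_qkernelD[OF k \<eta>]
  have ident: "(\<lambda>\<zeta>. \<zeta>) \<in> measurable (PiM {..<q} (\<lambda>_. k \<eta>)) Q"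
    unfolding Q_def measurable_PiM_Omega_q_iff[OF kernel(2)] by (rule measurable_ident_PiM_coord_sigma)
  have ev: "reindex q \<eta> \<in> measurable (measure_pmf (pmf_of_set (self_maps q))) Q"
    by (simp add: Q_def space_PiM reindex_def)
  interpret distr: prob_space "distr (PiM {..<q} (\<lambda>_. k \<eta>)) Q (\<lambda>\<zeta>. \<zeta>)"
    by (intro prob_space.prob_space_distr[OF prob_space_PiM ident] kernel(1))
  show ?thesis
  proof (rule measure_eqI_PiM_finite[where I = "{..<q}" and M = "\<lambda>_. coord_sigma (- L)"])
    fix B :: "nat \<Rightarrow> ('v \<Rightarrow> 'a) set"
    assume B: "\<And>i. i \<in> {..<q} \<Longrightarrow> B i \<in> sets (coord_sigma (- L))"
    then have B_sets: "PiE {..<q} B \<in> sets Q"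
      unfolding Q_def by (intro sets_PiM_I_finite) auto
    have "PiE {..<q} B \<inter> space (PiM {..<q} (\<lambda>_. k \<eta>)) = PiE {..<q} B"
      by (auto simp: space_PiM_Omega[OF kernel(2)])
    then have "emeasure (distr (PiM {..<q} (\<lambda>_. k \<eta>)) Q (\<lambda>\<zeta>. \<zeta>)) (PiE {..<q} B) =
        ennreal (card (PiE {..<q} (\<lambda>i. {j \<in> {..<q}. \<eta> j \<in> B i})) / card (self_maps q))"
      using B by (simp add: emeasure_distr[OF ident B_sets] emeasure_PiM_proper_prob_qkernel_PiE[OF k \<eta>])
    also have "PiE {..<q} (\<lambda>i. {j \<in> {..<q}. \<eta> j \<in> B i}) = self_maps q \<inter> reindex q \<eta> -` PiE {..<q} B"
      unfolding self_maps_def reindex_def Int_iff vimage_def restrict_PiE_iff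
      by (auto simp only: PiE_iff mem_Collect_eq lessThan_iff simp_thms)
    also have "ennreal (real (card \<dots>) / real (card (self_maps q))) =
        emeasure (distr (measure_pmf (pmf_of_set (self_maps q))) Q (reindex q \<eta>)) (PiE {..<q} B)"
      by (simp add: emeasure_distr[OF ev B_sets] emeasure_pmf_of_set self_maps_not_empty
          finite_self_maps ennreal_of_nat_eq_real_of_nat divide_ennreal)
    finally show "emeasure (distr (PiM {..<q} (\<lambda>_. k \<eta>)) Q (\<lambda>\<zeta>. \<zeta>)) (PiE {..<q} B) =
        emeasure (distr (measure_pmf (pmf_of_set (self_maps q))) Q (reindex q \<eta>)) (PiE {..<q} B)" .
  next
    show "range (\<lambda>_. space Q) \<subseteq> prod_algebra {..<q} (\<lambda>_. coord_sigma (- L))"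
      using sets.top[of "coord_sigma (- L)"]
      by (auto simp: Q_def space_PiM intro!: prod_algebraI_finite)
  qed (auto simp: Q_def distr.emeasure_finite[unfolded Q_def])
qed

lemma integral_PiM_proper_prob_qkernel:
  fixes k :: "(nat \<Rightarrow> 'v \<Rightarrow> 'a) \<Rightarrow> ('v \<Rightarrow> 'a) measure" and f :: "(nat \<Rightarrow> 'v \<Rightarrow> 'a) \<Rightarrow> real"
  assumes k: "proper_prob_qkernel q L k" and \<eta>: "\<eta> \<in> space (Omega_q q)"
    and f: "f \<in> borel_measurable (PiM {..<q} (\<lambda>_. coord_sigma (- L)))"
  shows "(\<integral>\<zeta>. f \<zeta> \<partial>PiM {..<q} (\<lambda>_. k \<eta>)) =
    (\<Sum>J\<in>self_maps q. f (reindex q \<eta> J)) / card (self_maps q)"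
proof -
  note kernel = proper_prob_qkernelD[OF k \<eta>]
  have ident: "(\<lambda>\<zeta>. \<zeta>) \<in> measurable (PiM {..<q} (\<lambda>_. k \<eta>)) (PiM {..<q} (\<lambda>_. coord_sigma (- L)))"
    unfolding measurable_PiM_Omega_q_iff[OF kernel(2)] by (rule measurable_ident_PiM_coord_sigma)
  have ev: "reindex q \<eta> \<in> measurable (measure_pmf (pmf_of_set (self_maps q)))
      (PiM {..<q} (\<lambda>_. coord_sigma (- L)))"
    by (simp add: space_PiM reindex_def)
  have "(\<integral>\<zeta>. f \<zeta> \<partial>PiM {..<q} (\<lambda>_. k \<eta>)) =
      (\<integral>\<zeta>. f \<zeta> \<partial>distr (PiM {..<q} (\<lambda>_. k \<eta>)) (PiM {..<q} (\<lambda>_. coord_sigma (- L))) (\<lambda>\<zeta>. \<zeta>))"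
    by (simp add: integral_distr[OF ident f])
  also have "\<dots> = (\<integral>J. f (reindex q \<eta> J) \<partial>measure_pmf (pmf_of_set (self_maps q)))"
    by (simp add: distr_PiM_proper_prob_qkernel[OF k \<eta>] integral_distr[OF ev f])
  finally show ?thesis
    by (simp add: integral_pmf_of_set finite_self_maps self_maps_not_empty)
qed

lemma sum_self_maps_apply:
  fixes \<phi> :: "nat \<Rightarrow> real"
  assumes "j < q"
  shows "(\<Sum>J\<in>self_maps q. \<phi> (J j)) = real q ^ (q - 1) * (\<Sum>m<q. \<phi> m)"
proof -
  have "(\<Sum>J\<in>self_maps q. \<phi> (J j)) = (\<Sum>J\<in>self_maps q. \<Prod>i<q. if i = j then \<phi> (J i) else 1)"
    using assms by (intro sum.cong refl) (simp add: prod.delta)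
  also have "\<dots> = (\<Prod>i<q. \<Sum>m<q. if i = j then \<phi> m else 1)"
    unfolding self_maps_def by (rule prod_sum_PiE[symmetric]) auto
  also have "\<dots> = (\<Prod>i<q. if i = j then (\<Sum>m<q. \<phi> m) else real q)"
    by (intro prod.cong) auto
  also have "\<dots> = (\<Sum>m<q. \<phi> m) * real q ^ (q - 1)"
  proof -
    have "{..<q} \<inter> - {j} = {..<q} - {j}" by auto
    then show ?thesis using assms by (simp add: prod.If_cases card_Diff_singleton)
  qed
  finally show ?thesis by simp
qed

lemma average_reindex_coordinate_mean:
  fixes f :: "'b \<Rightarrow> real" and q :: nat
  assumes "q \<ge> 1"
  shows "(\<Sum>K\<in>self_maps q. (\<Sum>j<q. f (reindex q \<zeta> K j)) / q) / card (self_maps q) = (\<Sum>j<q. f (\<zeta> j)) / q"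
proof -
  have "(\<Sum>K\<in>self_maps q. \<Sum>j<q. f (reindex q \<zeta> K j)) = (\<Sum>K\<in>self_maps q. \<Sum>j<q. f (\<zeta> (K j)))"
    by (intro sum.cong refl) (simp add: reindex_def)
  also have "\<dots> = (\<Sum>j<q. \<Sum>K\<in>self_maps q. f (\<zeta> (K j)))"
    by (rule sum.swap)
  also have "\<dots> = (\<Sum>j<q. real q ^ (q - 1) * (\<Sum>m<q. f (\<zeta> m)))"
    by (intro sum.cong refl) (simp add: sum_self_maps_apply[where \<phi> = "\<lambda>m. f (\<zeta> m)"])
  also have "\<dots> = real q ^ q * (\<Sum>m<q. f (\<zeta> m))"
    using assms by (cases q) simp_all
  finally show ?thesis
    using assms by (simp add: card_self_maps flip: sum_divide_distrib)
qed

text \<open>A maximum principle: \<open>|c|\<close> attains its maximum \<open>M\<close> at some \<open>J\<close>, and the average defining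
  \<open>c J\<close> contains the term for the constant map \<open>K \<equiv> 0\<close>, where \<open>c\<close> vanishes;
  hence \<open>M \<le> (1 - q\<^sup>-\<^sup>q) M\<close>.\<close>
lemma harmonic_on_self_maps_eq_0:
  fixes c :: "(nat \<Rightarrow> nat) \<Rightarrow> real"
  assumes q: "q \<ge> 1"
    and harmonic: "\<And>J. J \<in> self_maps q \<Longrightarrow>
      c J = (\<Sum>K\<in>self_maps q. c (reindex q J K)) / card (self_maps q)"
    and const: "\<And>m. m < q \<Longrightarrow> c (\<lambda>i\<in>{..<q}. m) = 0"
    and J: "J \<in> self_maps q"
  shows "c J = 0"
proof -
  let ?S = "self_maps q"
  define M where "M = Max ((\<lambda>J. \<bar>c J\<bar>) ` ?S)"
  have le_M: "\<bar>c J'\<bar> \<le> M" if "J' \<in> ?S" for J'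
    unfolding M_def using finite_self_maps that by (intro Max_ge) auto
  have "M \<in> (\<lambda>J. \<bar>c J\<bar>) ` ?S"
    unfolding M_def using finite_self_maps self_maps_not_empty by (intro Max_in) auto
  then obtain J0 where J0: "J0 \<in> ?S" "\<bar>c J0\<bar> = M" by auto
  define K0 where "K0 = (\<lambda>i\<in>{..<q}. 0 :: nat)"
  have K0: "K0 \<in> ?S" using q by (auto simp: K0_def self_maps_def)
  have "reindex q J0 K0 = (\<lambda>i\<in>{..<q}. J0 0)" by (auto simp: K0_def reindex_def)
  moreover have "J0 0 < q" using J0(1) q by (auto simp: self_maps_def PiE_iff)
  ultimately have c_K0: "c (reindex q J0 K0) = 0" using const by simp
  have card: "real (card ?S) > 0"
    using finite_self_maps self_maps_not_empty by (simp add: card_gt_0_iff)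
  have "(\<Sum>K\<in>?S. c (reindex q J0 K)) = c J0 * card ?S"
    using harmonic[OF J0(1)] card by (simp add: field_simps)
  then have "M * card ?S = \<bar>\<Sum>K\<in>?S. c (reindex q J0 K)\<bar>"
    using J0(2) by (simp add: abs_mult)
  also have "\<dots> \<le> (\<Sum>K\<in>?S. \<bar>c (reindex q J0 K)\<bar>)" by (rule sum_abs)
  also have "\<dots> = (\<Sum>K\<in>?S - {K0}. \<bar>c (reindex q J0 K)\<bar>)"
    using K0 c_K0 finite_self_maps by (simp add: sum.remove)
  also have "\<dots> \<le> (\<Sum>K\<in>?S - {K0}. M)"
    using J0(1) le_M reindex_in_self_maps by (intro sum_mono) auto
  also have "\<dots> = (real (card ?S) - 1) * M"
    using K0 finite_self_maps card by (simp add: card_Diff_singleton of_nat_diff)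
  finally have "M \<le> 0" by (simp add: algebra_simps)
  then show ?thesis using le_M[OF J] by simp
qed

lemma q_specification_measure_harmonic:
  assumes "q_specification q \<gamma>" "finite L" "A \<in> sets Omega" "\<zeta> \<in> space (Omega_q q)"
  shows "measure (\<gamma> L \<zeta>) A =
    (\<Sum>K\<in>self_maps q. measure (\<gamma> L (reindex q \<zeta> K)) A) / card (self_maps q)"
proof -
  have k: "proper_prob_qkernel q L (\<gamma> L)"
    using assms(1,2) by (simp add: q_specification_def)
  note kernel = proper_prob_qkernelD[OF k assms(4)]
  have "measure (\<gamma> L \<zeta>) A = measure (qbind q (\<gamma> L \<zeta>) (\<gamma> L)) A"
    by (simp add: q_specification_qbind[OF assms(1) order_refl assms(2,4)])
  also have "\<dots> = (\<integral>\<xi>. measure (\<gamma> L \<xi>) A \<partial>PiM {..<q} (\<lambda>_. \<gamma> L \<zeta>))"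
    by (rule measure_qbind[OF k kernel(1,2) assms(3)])
  also have "\<dots> = (\<Sum>K\<in>self_maps q. measure (\<gamma> L (reindex q \<zeta> K)) A) / card (self_maps q)"
    using k assms(3) unfolding proper_prob_qkernel_def
    by (intro integral_PiM_proper_prob_qkernel[OF k assms(4)]) blast
  finally show ?thesis .
qed

definition qdiag :: "nat \<Rightarrow> ('v \<Rightarrow> 'a) \<Rightarrow> nat \<Rightarrow> 'v \<Rightarrow> 'a" where
  "qdiag q \<omega> = (\<lambda>i\<in>{..<q}. \<omega>)"

lemma qdiag_in_space_Omega_q: "qdiag q \<omega> \<in> space (Omega_q q)"
  by (simp add: qdiag_def space_Omega_q)

text \<open>Both sides are harmonic functions of \<open>J \<mapsto> \<eta> \<circ> J\<close> on the self maps (the right side by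
  symmetry) and agree at the constant maps, so they agree at the identity.\<close>
lemma q_specification_measure_eq_average_qdiag:
  fixes \<gamma> :: "'v set \<Rightarrow> (nat \<Rightarrow> 'v \<Rightarrow> 'a) \<Rightarrow> ('v \<Rightarrow> 'a) measure"
  assumes q: "q \<ge> 1" and spec: "q_specification q \<gamma>" and L: "finite L"
    and A: "A \<in> sets Omega" and \<eta>: "\<eta> \<in> space (Omega_q q)"
  shows "measure (\<gamma> L \<eta>) A = (\<Sum>j<q. measure (\<gamma> L (qdiag q (\<eta> j))) A) / q"
proof -
  define a where "a \<zeta> = measure (\<gamma> L \<zeta>) A" for \<zeta>
  define b where "b \<zeta> = (\<Sum>j<q. a (qdiag q (\<zeta> j))) / q" for \<zeta> :: "nat \<Rightarrow> 'v \<Rightarrow> 'a"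
  define c where "c J = a (reindex q \<eta> J) - b (reindex q \<eta> J)" for J
  have a_harmonic: "a \<zeta> = (\<Sum>K\<in>self_maps q. a (reindex q \<zeta> K)) / card (self_maps q)"
    if "\<zeta> \<in> space (Omega_q q)" for \<zeta>
    unfolding a_def by (rule q_specification_measure_harmonic[OF spec L A that])
  have b_harmonic: "b \<zeta> = (\<Sum>K\<in>self_maps q. b (reindex q \<zeta> K)) / card (self_maps q)" for \<zeta>
    unfolding b_def by (rule average_reindex_coordinate_mean[OF q, where f = "\<lambda>\<omega>. a (qdiag q \<omega>)", symmetric])
  have "c J = (\<Sum>K\<in>self_maps q. c (reindex q J K)) / card (self_maps q)" if "J \<in> self_maps q" for J
  proof -
    have "c J = (\<Sum>K\<in>self_maps q. a (reindex q (reindex q \<eta> J) K) - b (reindex q (reindex q \<eta> J) K))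
        / card (self_maps q)"
      unfolding c_def
      by (subst a_harmonic[OF reindex_in_space_Omega_q], subst b_harmonic)
        (simp add: sum_subtractf diff_divide_distrib)
    then show ?thesis
      unfolding c_def by (simp add: reindex_reindex cong: sum.cong)
  qed
  moreover have "c (\<lambda>i\<in>{..<q}. m) = 0" if "m < q" for m
  proof -
    have "reindex q \<eta> (\<lambda>i\<in>{..<q}. m) = qdiag q (\<eta> m)"
      by (auto simp: reindex_def qdiag_def)
    moreover have "b (qdiag q \<omega>) = a (qdiag q \<omega>)" for \<omega>
      using q by (simp add: b_def qdiag_def)
    ultimately show ?thesis by (simp add: c_def)
  qed
  moreover have "(\<lambda>i\<in>{..<q}. i) \<in> self_maps q"
    by (simp add: self_maps_def)
  ultimately have "c (\<lambda>i\<in>{..<q}. i) = 0"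
    by (rule harmonic_on_self_maps_eq_0[OF q])
  moreover have "reindex q \<eta> (\<lambda>i\<in>{..<q}. i) = \<eta>"
    using \<eta> by (auto simp: reindex_def space_Omega_q PiE_iff extensional_def)
  ultimately show ?thesis by (simp add: c_def a_def b_def)
qed

lemma measure_proper_prob_qkernel_qdiag_Int:
  assumes q: "q \<ge> 1" and k: "proper_prob_qkernel q L k"
    and C: "C \<in> sets Omega" and D: "D \<in> sets (coord_sigma (- L))"
  shows "measure (k (qdiag q \<omega>)) (C \<inter> D) = measure (k (qdiag q \<omega>)) C * indicator D \<omega>"
proof -
  note kernel = proper_prob_qkernelD[OF k qdiag_in_space_Omega_q]
  interpret prob_space "k (qdiag q \<omega>)" by (rule kernel(1))
  have C': "C \<in> events" and D': "D \<in> events"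
    using C D sets_coord_sigma_subset kernel(2) by auto
  have "prob D = indicator D \<omega>"
    using kernel(3)[OF D] q by (simp add: qdiag_def)
  then show ?thesis
  proof (cases "\<omega> \<in> D")
    case True
    then have "AE x in k (qdiag q \<omega>). x \<in> D"
      using \<open>prob D = indicator D \<omega>\<close> prob_eq_1[OF D'] by simp
    then have "prob (C \<inter> D) = prob C"
      using C' D' by (intro finite_measure_eq_AE) auto
    then show ?thesis using True by simp
  next
    case False
    then have "AE x in k (qdiag q \<omega>). x \<notin> D"
      using \<open>prob D = indicator D \<omega>\<close> prob_eq_0[OF D'] by simp
    then have "prob (C \<inter> D) = prob {}"
      using C' D' by (intro finite_measure_eq_AE) auto
    then show ?thesis using False by simp
  qed
qed

section \<open>Equilibrium of cylinder limits\<close>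

lemma measurable_qdiag: "qdiag q \<in> measurable Omega (Omega_q q)"
  unfolding qdiag_def Omega_q_def by (rule measurable_restrict) simp

lemma continuous_map_qdiag:
  "continuous_map Omega_top (product_topology (\<lambda>_. Omega_top) {..<q}) (qdiag q)"
  unfolding continuous_map_componentwise qdiag_def by auto

lemma continuous_map_indicator_cylinder:
  assumes "finite F"
  shows "continuous_map Omega_top euclideanreal (indicator (cylinder F B) :: ('v \<Rightarrow> 'a) \<Rightarrow> real)"
  unfolding continuous_map_def
proof (intro conjI allI impI)
  fix U :: "real set"
  have "{\<omega> \<in> topspace Omega_top. indicator (cylinder F B) \<omega> \<in> U} =
      (if 1 \<in> U then cylinder F B else {}) \<union> (if 0 \<in> U then cylinder F (- B) else {})"
    unfolding cylinder_def by (auto simp: indicator_def)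
  then show "openin Omega_top {\<omega> \<in> topspace Omega_top. indicator (cylinder F B) \<omega> \<in> U}"
    using openin_cylinder[OF assms] by (auto intro!: openin_Un)
qed simp

lemma integral_PiM_coordinate_average:
  fixes h :: "'b \<Rightarrow> real" and q :: nat
  assumes m: "prob_space m" and q: "q \<ge> 1"
    and h: "h \<in> borel_measurable m" "\<And>\<omega>. \<bar>h \<omega>\<bar> \<le> B"
  shows "(\<integral>\<eta>. (\<Sum>j<q. h (\<eta> j)) / q \<partial>PiM {..<q} (\<lambda>_. m)) = (\<integral>\<omega>. h \<omega> \<partial>m)"
proof -
  interpret P: prob_space "PiM {..<q} (\<lambda>_. m)" by (rule prob_space_PiM) (rule m)
  have int: "integrable (PiM {..<q} (\<lambda>_. m)) (\<lambda>\<eta>. h (\<eta> j))" if "j < q" for j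
    using that h by (intro P.integrable_const_bound[of _ B])
      (auto intro: measurable_compose[OF measurable_component_singleton])
  have "(\<integral>\<eta>. h (\<eta> j) \<partial>PiM {..<q} (\<lambda>_. m)) = (\<integral>\<omega>. h \<omega> \<partial>m)" if "j < q" for j
  proof -
    have "(\<integral>\<eta>. h (\<eta> j) \<partial>PiM {..<q} (\<lambda>_. m)) = integral\<^sup>L (distr (PiM {..<q} (\<lambda>_. m)) m (\<lambda>\<eta>. \<eta> j)) h"
      using that h(1) by (intro integral_distr[symmetric] measurable_component_singleton) auto
    also have "distr (PiM {..<q} (\<lambda>_. m)) m (\<lambda>\<eta>. \<eta> j) = m"
      using m that by (intro distr_PiM_component) auto
    finally show ?thesis .
  qed
  then show ?thesis
    using int q by (simp add: Bochner_Integration.integral_sum)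
qed

definition split_cylinders :: "'v set \<Rightarrow> ('v \<Rightarrow> 'a) set set" where
  "split_cylinders L =
    {cylinder F B \<inter> cylinder G B' | F B G B'. finite F \<and> F \<subseteq> L \<and> finite G \<and> G \<subseteq> - L}"

lemma split_cylinders_subset_cylinders: "split_cylinders L \<subseteq> cylinders"
  unfolding split_cylinders_def cylinder_Int by (auto intro: cylinder_in_cylinders)

lemma Int_stable_split_cylinders: "Int_stable (split_cylinders L :: ('v \<Rightarrow> 'a) set set)"
proof (rule Int_stableI)
  fix X Y :: "('v \<Rightarrow> 'a) set" assume "X \<in> split_cylinders L" "Y \<in> split_cylinders L"
  then obtain F B G B' F' C G' C' where
    "X = cylinder F B \<inter> cylinder G B'" "finite F" "F \<subseteq> L" "finite G" "G \<subseteq> - L" and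
    "Y = cylinder F' C \<inter> cylinder G' C'" "finite F'" "F' \<subseteq> L" "finite G'" "G' \<subseteq> - L"
    unfolding split_cylinders_def by blast
  moreover have "X \<inter> Y = (cylinder F B \<inter> cylinder F' C) \<inter> (cylinder G B' \<inter> cylinder G' C')"
    using calculation by blast
  ultimately show "X \<inter> Y \<in> split_cylinders L"
    unfolding split_cylinders_def cylinder_Int by blast
qed

lemma UNIV_in_split_cylinders: "UNIV \<in> split_cylinders L"
proof -
  have "UNIV = cylinder {} UNIV \<inter> cylinder {} UNIV" by (simp add: cylinder_def)
  then show ?thesis unfolding split_cylinders_def by blast
qed

lemma sets_Omega_split_cylinders:
  "sets (Omega :: ('v \<Rightarrow> 'a::finite) measure) = sigma_sets UNIV (split_cylinders L)"
proof (rule sets_Omega_generated[OF _ split_cylinders_subset_cylinders])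
  fix i :: 'v and B :: "('v \<Rightarrow> 'a) set"
  have "cylinder {i} B = cylinder {i} B \<inter> cylinder {} UNIV" "cylinder {i} B = cylinder {} UNIV \<inter> cylinder {i} B"
    by (auto simp: cylinder_def)
  then show "cylinder {i} B \<in> split_cylinders L"
    unfolding split_cylinders_def by (cases "i \<in> L") blast+
qed

text \<open>On a split cylinder \<open>C \<inter> D\<close> the kernel is an average of single-coordinate functions, so
  integrating it against \<open>m\<^sup>\<otimes>\<^sup>q\<close> only involves \<open>m\<close>.\<close>
lemma measure_qbind_split_cylinder:
  fixes \<gamma> :: "'v set \<Rightarrow> (nat \<Rightarrow> 'v \<Rightarrow> 'a::finite) \<Rightarrow> ('v \<Rightarrow> 'a) measure"
    and B B' :: "('v \<Rightarrow> 'a) set"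
  assumes q: "q \<ge> 1" and spec: "q_specification q \<gamma>" and L: "finite L"
    and F: "finite F" "F \<subseteq> L" and G: "finite G" "G \<subseteq> - L"
    and m: "prob_space m" "sets m = sets Omega"
  defines "h \<equiv> \<lambda>\<omega>. measure (\<gamma> L (qdiag q \<omega>)) (cylinder F B) * indicator (cylinder G B') \<omega>"
  shows "h \<in> borel_measurable Omega" "\<And>\<omega>. \<bar>h \<omega>\<bar> \<le> 1"
    and "measure (qbind q m (\<gamma> L)) (cylinder F B \<inter> cylinder G B') = (\<integral>\<omega>. h \<omega> \<partial>m)"
proof -
  let ?A = "cylinder F B \<inter> cylinder G B'"
  have k: "proper_prob_qkernel q L (\<gamma> L)" using spec L by (simp add: q_specification_def)
  have C: "cylinder F B \<in> sets Omega" and D: "cylinder G B' \<in> sets (coord_sigma (- L))"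
    using F G cylinders_subset_Omega cylinder_in_cylinders cylinder_in_coord_sigma by blast+
  then have A: "?A \<in> sets Omega" using sets_coord_sigma_subset by blast
  show h_meas: "h \<in> borel_measurable Omega"
    unfolding h_def using measurable_compose[OF measurable_qdiag measurable_proper_prob_qkernel[OF k C]]
    by (intro borel_measurable_times borel_measurable_indicator)
      (auto simp: sets_coord_sigma_subset[THEN subsetD, OF D])
  show h_bounded: "\<bar>h \<omega>\<bar> \<le> 1" for \<omega>
    using prob_space.prob_le_1[OF proper_prob_qkernelD(1)[OF k qdiag_in_space_Omega_q]]
    by (simp add: h_def indicator_def)
  have "measure (qbind q m (\<gamma> L)) ?A = (\<integral>\<eta>. measure (\<gamma> L \<eta>) ?A \<partial>PiM {..<q} (\<lambda>_. m))"
    by (rule measure_qbind[OF k m A])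
  also have "\<dots> = (\<integral>\<eta>. (\<Sum>j<q. h (\<eta> j)) / q \<partial>PiM {..<q} (\<lambda>_. m))"
  proof (intro Bochner_Integration.integral_cong refl)
    fix \<eta> assume "\<eta> \<in> space (PiM {..<q} (\<lambda>_. m))"
    then have \<eta>: "\<eta> \<in> space (Omega_q q)" by (simp add: space_PiM_Omega[OF m(2)] space_Omega_q)
    show "measure (\<gamma> L \<eta>) ?A = (\<Sum>j<q. h (\<eta> j)) / q"
      unfolding q_specification_measure_eq_average_qdiag[OF q spec L A \<eta>] h_def
      by (simp add: measure_proper_prob_qkernel_qdiag_Int[OF q k C D])
  qed
  also have "\<dots> = (\<integral>\<omega>. h \<omega> \<partial>m)"
    by (intro integral_PiM_coordinate_average[OF m(1) q _ h_bounded])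
      (simp only: measurable_cong_sets[OF m(2) refl] h_meas)
  finally show "measure (qbind q m (\<gamma> L)) ?A = (\<integral>\<omega>. h \<omega> \<partial>m)" .
qed

lemma quasilocal_split_integrand_continuous:
  fixes \<gamma> :: "'v set \<Rightarrow> (nat \<Rightarrow> 'v \<Rightarrow> 'a::finite) \<Rightarrow> ('v \<Rightarrow> 'a) measure"
    and B B' :: "('v \<Rightarrow> 'a) set"
  assumes "quasilocal q \<gamma>" "finite L" "finite F" "F \<subseteq> L" "finite G"
  shows "continuous_map Omega_top euclideanreal
    (\<lambda>\<omega>. measure (\<gamma> L (qdiag q \<omega>)) (cylinder F B) * indicator (cylinder G B') \<omega>)"
proof -
  have "cylinder F B \<in> sets (coord_sigma L)"
    using assms(3,4) by (rule cylinder_in_coord_sigma)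
  then have "continuous_map (product_topology (\<lambda>_. Omega_top) {..<q}) euclideanreal
      (\<lambda>\<eta>. measure (\<gamma> L \<eta>) (cylinder F B))"
    using assms(1,2) unfolding quasilocal_def by blast
  then have "continuous_map Omega_top euclideanreal (\<lambda>\<omega>. measure (\<gamma> L (qdiag q \<omega>)) (cylinder F B))"
    using continuous_map_compose[OF continuous_map_qdiag] by (simp add: comp_def)
  then show ?thesis
    using continuous_map_indicator_cylinder[OF assms(5)] by (rule continuous_map_real_mult)
qed

text \<open>The integrand \<open>h\<close> of the split-cylinder formula is continuous by quasilocality, so its
  integrals converge along the \<open>\<gamma>\<^sub>\<Lambda>\<^sub>n(\<cdot> | \<eta>)\<close>; once \<open>L \<subseteq> \<Lambda>\<^sub>n\<close>, consistency turns them into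
  \<open>\<gamma>\<^sub>\<Lambda>\<^sub>n(A | \<eta>)\<close>.\<close>
lemma measure_qbind_cylinder_limit:
  fixes \<gamma> :: "'v set \<Rightarrow> (nat \<Rightarrow> 'v \<Rightarrow> 'a::finite) \<Rightarrow> ('v \<Rightarrow> 'a) measure"
  assumes q: "q \<ge> 1" and spec: "q_specification q \<gamma>" and ql: "quasilocal q \<gamma>"
    and \<Lambda>: "\<And>n. finite (\<Lambda> n)" and L: "finite L" and exhaust: "\<forall>\<^sub>F n in sequentially. L \<subseteq> \<Lambda> n"
    and \<eta>: "\<eta> \<in> space (Omega_q q)" and \<nu>: "prob_space \<nu>" "sets \<nu> = sets Omega"
    and conv: "\<And>C. C \<in> cylinders \<Longrightarrow> (\<lambda>n. measure (\<gamma> (\<Lambda> n) \<eta>) C) \<longlonglongrightarrow> measure \<nu> C"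
    and A: "A \<in> split_cylinders L"
  shows "measure (qbind q \<nu> (\<gamma> L)) A = measure \<nu> A"
proof -
  obtain F B G B' where A_eq: "A = cylinder F B \<inter> cylinder G B'"
    and F: "finite F" "F \<subseteq> L" and G: "finite G" "G \<subseteq> - L"
    using A unfolding split_cylinders_def by blast
  define h where "h \<omega> = measure (\<gamma> L (qdiag q \<omega>)) (cylinder F B) * indicator (cylinder G B') \<omega>" for \<omega>
  note split = measure_qbind_split_cylinder[OF q spec L F G, where B = B and B' = B', folded h_def]
  have "proper_prob_qkernel q (\<Lambda> n) (\<gamma> (\<Lambda> n))" for n
    using spec \<Lambda> by (simp add: q_specification_def)
  note \<mu> = proper_prob_qkernelD(1,2)[OF this \<eta>]
  have "(\<lambda>n. \<integral>\<omega>. h \<omega> \<partial>\<gamma> (\<Lambda> n) \<eta>) \<longlonglongrightarrow> (\<integral>\<omega>. h \<omega> \<partial>\<nu>)"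
    using quasilocal_split_integrand_continuous[OF ql L F G(1)] split(1,2)[OF \<nu>] \<mu> \<nu> conv
    unfolding h_def by (intro integral_tendsto_of_cylinders_tendsto) auto
  moreover have "\<forall>\<^sub>F n in sequentially. (\<integral>\<omega>. h \<omega> \<partial>\<gamma> (\<Lambda> n) \<eta>) = measure (\<gamma> (\<Lambda> n) \<eta>) A"
    using exhaust
  proof (rule eventually_mono)
    fix n assume "L \<subseteq> \<Lambda> n"
    then have "measure (\<gamma> (\<Lambda> n) \<eta>) A = measure (qbind q (\<gamma> (\<Lambda> n) \<eta>) (\<gamma> L)) A"
      using q_specification_qbind[OF spec _ \<Lambda> \<eta>] by simp
    also have "\<dots> = (\<integral>\<omega>. h \<omega> \<partial>\<gamma> (\<Lambda> n) \<eta>)"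
      unfolding A_eq by (rule split(3)[OF \<mu>])
    finally show "(\<integral>\<omega>. h \<omega> \<partial>\<gamma> (\<Lambda> n) \<eta>) = measure (\<gamma> (\<Lambda> n) \<eta>) A" by simp
  qed
  ultimately have "(\<lambda>n. measure (\<gamma> (\<Lambda> n) \<eta>) A) \<longlonglongrightarrow> (\<integral>\<omega>. h \<omega> \<partial>\<nu>)"
    by (rule Lim_transform_eventually)
  then have "(\<integral>\<omega>. h \<omega> \<partial>\<nu>) = measure \<nu> A"
    using conv A split_cylinders_subset_cylinders LIMSEQ_unique by blast
  then show ?thesis using split(3)[OF \<nu>] by (simp add: A_eq)
qed

lemma Gq_of_cylinder_limit:
  fixes \<gamma> :: "'v set \<Rightarrow> (nat \<Rightarrow> 'v \<Rightarrow> 'a::finite) \<Rightarrow> ('v \<Rightarrow> 'a) measure"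
  assumes q: "q \<ge> 1" and spec: "q_specification q \<gamma>" and ql: "quasilocal q \<gamma>"
    and \<Lambda>: "\<And>n. finite (\<Lambda> n)" and exhaust: "\<And>L. finite L \<Longrightarrow> \<forall>\<^sub>F n in sequentially. L \<subseteq> \<Lambda> n"
    and \<eta>: "\<eta> \<in> space (Omega_q q)" and \<nu>: "prob_space \<nu>" "sets \<nu> = sets Omega"
    and conv: "\<And>C. C \<in> cylinders \<Longrightarrow> (\<lambda>n. measure (\<gamma> (\<Lambda> n) \<eta>) C) \<longlonglongrightarrow> measure \<nu> C"
  shows "\<nu> \<in> Gq q \<gamma>"
proof (rule Gq_qbindI[OF spec \<nu>])
  fix L :: "'v set" assume L: "finite L"
  have k: "proper_prob_qkernel q L (\<gamma> L)" using spec L by (simp add: q_specification_def)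
  interpret qbind: prob_space "qbind q \<nu> (\<gamma> L)" by (rule prob_space_qbind[OF k \<nu>])
  interpret \<nu>: prob_space \<nu> by (rule \<nu>(1))
  show "qbind q \<nu> (\<gamma> L) = \<nu>"
  proof (rule measure_eqI_generator_eq_countable[OF Int_stable_split_cylinders, where A = "{UNIV}"])
    fix X :: "('v \<Rightarrow> 'a) set" assume "X \<in> split_cylinders L"
    then show "emeasure (qbind q \<nu> (\<gamma> L)) X = emeasure \<nu> X"
      using measure_qbind_cylinder_limit[OF q spec ql \<Lambda> L exhaust[OF L] \<eta> \<nu> conv]
      by (simp add: qbind.emeasure_eq_measure \<nu>.emeasure_eq_measure)
  qed (auto simp: sets_qbind[OF k \<nu>] \<nu>(2) UNIV_in_split_cylinders
      simp flip: sets_Omega_split_cylinders)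
qed

lemma countable_exhausting_finite_sets:
  obtains \<Lambda> :: "nat \<Rightarrow> 'v::countable set"
  where "\<And>n. finite (\<Lambda> n)" "\<And>L. finite L \<Longrightarrow> \<forall>\<^sub>F n in sequentially. L \<subseteq> \<Lambda> n"
proof
  show "finite (to_nat -` {..<n} :: 'v set)" for n
    by (rule finite_vimageI) (auto simp: inj_to_nat)
  fix L :: "'v set" assume "finite L"
  then obtain N where "to_nat ` L \<subseteq> {..<N}" using finite_nat_bounded[OF finite_imageI] by blast
  then have "L \<subseteq> to_nat -` {..<n}" if "n \<ge> N" for n
    using that by fastforce
  then show "\<forall>\<^sub>F n in sequentially. L \<subseteq> to_nat -` {..<n}"
    unfolding eventually_sequentially by blast
qed

theorem mainTheorem5:
  fixes \<gamma> :: "'v::countable set \<Rightarrow> (nat \<Rightarrow> 'v \<Rightarrow> 'a::finite) \<Rightarrow> ('v \<Rightarrow> 'a) measure"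
    and q :: nat
  assumes "q \<ge> 1"
    and "q_specification q \<gamma>"
    and "quasilocal q \<gamma>"
  shows "Gq q \<gamma> \<noteq> {}"
proof -
  obtain \<Lambda> :: "nat \<Rightarrow> 'v set" where \<Lambda>_finite: "\<And>n. finite (\<Lambda> n)"
    and \<Lambda>_exhaust: "\<And>L. finite L \<Longrightarrow> \<forall>\<^sub>F n in sequentially. L \<subseteq> \<Lambda> n"
    using countable_exhausting_finite_sets by blast
  define \<eta> :: "nat \<Rightarrow> 'v \<Rightarrow> 'a" where "\<eta> = qdiag q undefined"
  have proper: "proper_prob_qkernel q (\<Lambda> n) (\<gamma> (\<Lambda> n))" for n
    using assms(2) \<Lambda>_finite by (simp add: q_specification_def)
  have \<eta>: "\<eta> \<in> space (Omega_q q)"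
    unfolding \<eta>_def by (rule qdiag_in_space_Omega_q)
  note \<mu> = proper_prob_qkernelD(1,2)[OF proper \<eta>]
  obtain d where d: "strict_mono d" "\<And>C. C \<in> cylinders \<Longrightarrow> convergent (\<lambda>n. measure (\<gamma> (\<Lambda> (d n)) \<eta>) C)"
    using convergent_subseq_on_cylinders[of "\<lambda>n. \<gamma> (\<Lambda> n) \<eta>"] \<mu>(1) by blast
  obtain \<nu> where \<nu>: "prob_space \<nu>" "sets \<nu> = sets Omega"
    "\<And>C. C \<in> cylinders \<Longrightarrow> (\<lambda>n. measure (\<gamma> (\<Lambda> (d n)) \<eta>) C) \<longlonglongrightarrow> measure \<nu> C"
    using cylinder_limit_measure[of "\<lambda>n. \<gamma> (\<Lambda> (d n)) \<eta>"] \<mu> d(2) by blast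
  have "\<forall>\<^sub>F n in sequentially. L \<subseteq> \<Lambda> (d n)" if "finite L" for L
    using eventually_compose_filterlim[OF \<Lambda>_exhaust[OF that] filterlim_subseq[OF d(1)]] .
  then have "\<nu> \<in> Gq q \<gamma>"
    using Gq_of_cylinder_limit[OF assms \<Lambda>_finite _ \<eta> \<nu>] by blast
  then show ?thesis by blast
qed

end
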